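(* Assume Assumptions 1, let $s\in(0,1/2)$ and $m\in\mathbb N$. Then for every $f\in C(\overline{\mathbb R})$, $$\lim_{\kappa\downarrow0}\ \sup_{E\in\mathbb R}\ \big\|T^m_{\kappa,E,s}f-T^m_{0,E,s}f\big\|_\infty=0,$$ where $\|\cdot\|_\infty$ is the sup-norm on $C(\overline{\mathbb R})$.
   Context: Assumptions 1: $\nu$ has bounded density (also denoted $\nu$) supported in $[-K,K]$, $K<\infty$; $\sigma$ is a probability measure on $\mathbb R^2$ supported in $[-1,1]^2$. $\overline{\mathbb R}=\mathbb R\cup\{i\infty\}$ is the one-point compactification of $\mathbb R$ and $C(\overline{\mathbb R})$ the real continuous functions on it with sup-norm. For $\kappa\ge0$ let $\mu_\kappa$ be the law of $q=(r+\kappa p_0,r+\kappa p_1)$ with $r\sim\nu$, $(p_0,p_1)\sim\sigma$ independent. For $E\in\mathbb R$, $q=(q_0,q_1)$, define $\phi^\pm_{E,q}(w)=\tfrac12\big(\frac{-1}{w+(E-q_0)/\sqrt2}\pm\frac{-1}{w+(E-q_1)/\sqrt2}\big)$, $\phi^\pm_{E,q}(i\infty)=0$, and on $C(\overline{\mathbb R})$ $(T_{\kappa,E,s}f)(w)=\int f(\phi^+_{E,q}(w))\big(|\phi^+_{E,q}(w)|^s+|\phi^-_{E,q}(w)|^s\big)\,d\mu_\kappa(q)$, $(T_{\kappa,E,s}f)(i\infty)=0$. *)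

theory Defs
  imports "HOL-Probability.Probability"
begin

text \<open>The one-point compactification of the reals is modelled as real option:
  Some x is the real point x, None is the point at infinity (written i infinity in the paper).\<close>

definition in_C_rbar :: "(real option \<Rightarrow> real) \<Rightarrow> bool" where
  "in_C_rbar f \<longleftrightarrow> continuous_on UNIV (\<lambda>x. f (Some x)) \<and>
     ((\<lambda>x. f (Some x)) \<longlongrightarrow> f None) at_infinity"

definition phi_plus :: "real \<Rightarrow> real \<times> real \<Rightarrow> real option \<Rightarrow> real option" where
  "phi_plus E q w = (case w of None \<Rightarrow> Some 0
     | Some x \<Rightarrow> if x + (E - fst q) / sqrt 2 = 0 \<or> x + (E - snd q) / sqrt 2 = 0 then None
         else Some (((-1) / (x + (E - fst q) / sqrt 2) + (-1) / (x + (E - snd q) / sqrt 2)) / 2))"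

definition phi_minus :: "real \<Rightarrow> real \<times> real \<Rightarrow> real option \<Rightarrow> real option" where
  "phi_minus E q w = (case w of None \<Rightarrow> Some 0
     | Some x \<Rightarrow> if x + (E - fst q) / sqrt 2 = 0 \<or> x + (E - snd q) / sqrt 2 = 0 then None
         else Some (((-1) / (x + (E - fst q) / sqrt 2) - (-1) / (x + (E - snd q) / sqrt 2)) / 2))"

text \<open>Absolute value of a point of the compactification; the value at infinity is a
  convention only used on a null set of q.\<close>
definition opt_abs :: "real option \<Rightarrow> real" where
  "opt_abs w = (case w of None \<Rightarrow> 0 | Some x \<Rightarrow> \<bar>x\<bar>)"

definition mu :: "(real \<Rightarrow> real) \<Rightarrow> (real \<times> real) measure \<Rightarrow> real \<Rightarrow> (real \<times> real) measure" where
  "mu nu sig \<kappa> = distr (density lborel (\<lambda>r. ennreal (nu r)) \<Otimes>\<^sub>M sig) borel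
     (\<lambda>(r, p). (r + \<kappa> * fst p, r + \<kappa> * snd p))"

definition T_op :: "(real \<Rightarrow> real) \<Rightarrow> (real \<times> real) measure \<Rightarrow> real \<Rightarrow> real \<Rightarrow> real
    \<Rightarrow> (real option \<Rightarrow> real) \<Rightarrow> real option \<Rightarrow> real" where
  "T_op nu sig \<kappa> E s f w = (case w of None \<Rightarrow> 0
     | Some _ \<Rightarrow> \<integral>q. f (phi_plus E q w) *
          (opt_abs (phi_plus E q w) powr s + opt_abs (phi_minus E q w) powr s) \<partial>(mu nu sig \<kappa>))"

end

theory Submission
  imports Defs
begin

(*
  On real points the operator acts on the real part G of a function
  through the kernel  kernel s G a b = G(phi+) (|phi+|^s + |phi-|^s), where
  a = x + (E - q0)/sqrt 2, b = x + (E - q1)/sqrt 2 and phi+-  = ((-1)/a +- (-1)/b)/2.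
  Writing q = (r + kappa p0, r + kappa p1) with (r,p) ~ nu (x) sig, and c = x + E/sqrt 2,
  T_kappa G (x) is the integral over nu (x) sig of the kernel at
  (c - r/sqrt 2 - kappa p0/sqrt 2, c - r/sqrt 2 - kappa p1/sqrt 2).
  The central estimate (shift_small) says: for a uniformly bounded, uniformly
  equicontinuous family G, perturbing both arguments by at most kappa changes this
  integral by an amount that is small uniformly in c and in the family once kappa is
  small.  Its proof splits at |c - r/sqrt 2| < delta: near the singularity the kernel
  is dominated by |a|^(-s) + |b|^(-s), whose nu-mass on a window of width delta is
  O(delta^(1-s)) because nu has bounded density; away from it the kernel is locally
  Hoelder in (a,b).  Two consequences follow: T_0 maps bounded equicontinuous families
  to bounded equicontinuous families (a shift in x is a perturbation of the arguments),
  and T_kappa g_kappa -> T_0 g_0 uniformly whenever g_kappa -> g_0 uniformly.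
  Induction on m then gives the theorem on real points; at infinity every iterate of
  positive order vanishes.
*)

lemma powr_subadd:
  fixes x y s :: real assumes "0 \<le> x" "0 \<le> y" "0 < s" "s \<le> 1"
  shows "(x + y) powr s \<le> x powr s + y powr s"
proof (cases "x + y = 0")
  case True thus ?thesis using assms by simp
next
  case False
  define t where "t = x + y"
  have t: "0 < t" using False assms unfolding t_def by simp
  have "x / t \<le> (x / t) powr s"
    using powr_mono'[of s 1 "x/t"] assms t by (simp add: t_def)
  moreover have "y / t \<le> (y / t) powr s"
    using powr_mono'[of s 1 "y/t"] assms t by (simp add: t_def)
  moreover have "x / t + y / t = 1" using t by (simp add: t_def add_divide_distrib[symmetric])
  ultimately have "1 \<le> (x / t) powr s + (y / t) powr s" by linarith
  hence "t powr s * 1 \<le> t powr s * ((x / t) powr s + (y / t) powr s)"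
    by (intro mult_left_mono) auto
  also have "\<dots> = x powr s + y powr s"
    using t assms by (simp add: powr_divide distrib_left)
  finally show ?thesis by (simp add: t_def)
qed

lemma powr_diff_le:
  fixes x y s :: real assumes "0 \<le> x" "0 \<le> y" "0 < s" "s \<le> 1"
  shows "\<bar>x powr s - y powr s\<bar> \<le> \<bar>x - y\<bar> powr s"
proof -
  have "b powr s - a powr s \<le> \<bar>a - b\<bar> powr s" "a powr s \<le> b powr s"
    if "0 \<le> a" "a \<le> b" for a b :: real
  proof -
    have "b powr s = (a + (b - a)) powr s" by simp
    also have "\<dots> \<le> a powr s + (b - a) powr s" using assms that by (intro powr_subadd) auto
    finally show "b powr s - a powr s \<le> \<bar>a - b\<bar> powr s" using that by simp
    show "a powr s \<le> b powr s" using that assms by (intro powr_mono2) auto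
  qed
  from this[of x y] this[of y x] assms show ?thesis
    by (cases "x \<le> y") (auto simp: abs_minus_commute)
qed

lemma frac_bound:
  fixes n d N D :: real
  assumes "\<bar>n\<bar> \<le> N" "D \<le> \<bar>d\<bar>" "0 < D"
  shows "\<bar>n / d\<bar> \<le> N / D"
proof -
  have "\<bar>n / d\<bar> = \<bar>n\<bar> / \<bar>d\<bar>" by (simp add: abs_divide)
  also have "\<dots> \<le> N / \<bar>d\<bar>" using assms by (intro divide_right_mono) auto
  also have "\<dots> \<le> N / D" using assms by (intro divide_left_mono) auto
  finally show ?thesis .
qed

lemma powr_small:
  fixes p e C :: real assumes "0 < p" "0 < e" "0 \<le> C"
  obtains b where "0 < b" "\<And>x. 0 \<le> x \<Longrightarrow> x \<le> b \<Longrightarrow> C * x powr p \<le> e"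
proof
  show "0 < (e / (C + 1)) powr (1/p)" using assms by simp
  fix x assume x: "0 \<le> x" "x \<le> (e / (C + 1)) powr (1/p)"
  have "x powr p \<le> ((e / (C + 1)) powr (1/p)) powr p" using x assms by (intro powr_mono2) auto
  also have "\<dots> = e / (C + 1)" using assms by (simp add: powr_powr)
  finally have "C * x powr p \<le> C * (e / (C + 1))" using assms by (intro mult_left_mono) auto
  also have "\<dots> \<le> e" using assms by (simp add: field_simps)
  finally show "C * x powr p \<le> e" .
qed

section \<open>The kernel on real arguments\<close>

text \<open>The two branches of the map \<open>\<phi>\<^sup>\<plusminus>\<close>, as functions of the shifted arguments
  \<open>a = w + (E - q\<^sub>0)/\<surd>2\<close> and \<open>b = w + (E - q\<^sub>1)/\<surd>2\<close>.\<close>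
definition rphi_plus :: "real \<Rightarrow> real \<Rightarrow> real" where
  "rphi_plus a b = ((-1)/a + (-1)/b)/2"

definition rphi_minus :: "real \<Rightarrow> real \<Rightarrow> real" where
  "rphi_minus a b = ((-1)/a - (-1)/b)/2"

text \<open>The integrand of the operator for a real-valued \<open>G\<close>; the null set \<open>a = 0 \<or> b = 0\<close>
  is given the value 0.\<close>
definition kernel :: "real \<Rightarrow> (real \<Rightarrow> real) \<Rightarrow> real \<Rightarrow> real \<Rightarrow> real" where
  "kernel s G a b = (if a = 0 \<or> b = 0 then 0
     else G (rphi_plus a b) * (\<bar>rphi_plus a b\<bar> powr s + \<bar>rphi_minus a b\<bar> powr s))"

lemma kernel_measurable[measurable (raw)]:
  assumes [measurable]: "G \<in> borel_measurable borel" "f \<in> borel_measurable M" "g \<in> borel_measurable M"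
  shows "(\<lambda>x. kernel s G (f x) (g x)) \<in> borel_measurable M"
  unfolding kernel_def rphi_plus_def rphi_minus_def by measurable

lemma kernel_diff: "kernel s G1 a b - kernel s G2 a b = kernel s (\<lambda>x. G1 x - G2 x) a b"
  by (simp add: kernel_def algebra_simps)

lemma rphi_le_max:
  assumes "a \<noteq> 0" "b \<noteq> 0"
  shows "\<bar>rphi_plus a b\<bar> \<le> max (1/\<bar>a\<bar>) (1/\<bar>b\<bar>)" "\<bar>rphi_minus a b\<bar> \<le> max (1/\<bar>a\<bar>) (1/\<bar>b\<bar>)"
proof -
  have avg: "(1/\<bar>a\<bar> + 1/\<bar>b\<bar>)/2 \<le> max (1/\<bar>a\<bar>) (1/\<bar>b\<bar>)" by (auto simp: max_def)
  have "\<bar>(-1)/a + (-1)/b\<bar> \<le> \<bar>(-1)/a\<bar> + \<bar>(-1)/b\<bar>" by (rule abs_triangle_ineq)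
  thus "\<bar>rphi_plus a b\<bar> \<le> max (1/\<bar>a\<bar>) (1/\<bar>b\<bar>)" using avg unfolding rphi_plus_def by simp
  have "\<bar>(-1)/a - (-1)/b\<bar> \<le> \<bar>(-1)/a\<bar> + \<bar>(-1)/b\<bar>" by (rule abs_triangle_ineq4)
  thus "\<bar>rphi_minus a b\<bar> \<le> max (1/\<bar>a\<bar>) (1/\<bar>b\<bar>)" using avg unfolding rphi_minus_def by simp
qed

lemma powr_max_inv_le:
  fixes a b s :: real assumes "0 \<le> s"
  shows "(max (1/\<bar>a\<bar>) (1/\<bar>b\<bar>)) powr s \<le> \<bar>a\<bar> powr (-s) + \<bar>b\<bar> powr (-s)"
proof -
  have inv: "(1 / \<bar>x\<bar>) powr s = \<bar>x\<bar> powr (-s)" for x :: real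
    by (simp add: powr_divide powr_minus_divide)
  have "(max (1/\<bar>a\<bar>) (1/\<bar>b\<bar>)) powr s = (1/\<bar>a\<bar>) powr s \<or> (max (1/\<bar>a\<bar>) (1/\<bar>b\<bar>)) powr s = (1/\<bar>b\<bar>) powr s"
    by (simp add: max_def)
  moreover have "0 \<le> \<bar>a\<bar> powr (-s)" "0 \<le> \<bar>b\<bar> powr (-s)" by auto
  ultimately show ?thesis unfolding inv by linarith
qed

lemma kernel_bound:
  assumes G: "\<And>x. \<bar>G x\<bar> \<le> M" and s: "0 \<le> s"
  shows "\<bar>kernel s G a b\<bar> \<le> 2 * M * (\<bar>a\<bar> powr (-s) + \<bar>b\<bar> powr (-s))"
proof -
  have M0: "0 \<le> M" using G[of 0] by linarith
  show ?thesis
  proof (cases "a = 0 \<or> b = 0")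
    case True thus ?thesis using M0 by (auto simp: kernel_def)
  next
    case False
    have "\<bar>rphi_plus a b\<bar> powr s \<le> \<bar>a\<bar> powr (-s) + \<bar>b\<bar> powr (-s)"
         "\<bar>rphi_minus a b\<bar> powr s \<le> \<bar>a\<bar> powr (-s) + \<bar>b\<bar> powr (-s)"
      using powr_mono2[OF s _ rphi_le_max(1)] powr_mono2[OF s _ rphi_le_max(2)] False
        powr_max_inv_le[OF s, of a b] by (meson abs_ge_zero order_trans)+
    moreover have "\<bar>kernel s G a b\<bar> = \<bar>G (rphi_plus a b)\<bar> * (\<bar>rphi_plus a b\<bar> powr s + \<bar>rphi_minus a b\<bar> powr s)"
      using False by (simp add: kernel_def abs_mult)
    ultimately have "\<bar>kernel s G a b\<bar> \<le> M * (2 * (\<bar>a\<bar> powr (-s) + \<bar>b\<bar> powr (-s)))"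
      using G M0 by (metis add_mono mult_mono abs_ge_zero mult_2 powr_ge_zero add_nonneg_nonneg)
    thus ?thesis by (simp add: algebra_simps)
  qed
qed

lemma kernel_local:
  assumes G: "\<And>x. \<bar>G x\<bar> \<le> M"
    and cont: "\<And>u v. \<bar>u - v\<bar> \<le> 2 * \<kappa> / \<delta>^2 \<Longrightarrow> \<bar>G u - G v\<bar> \<le> \<eta>"
    and d: "0 < \<delta>" "\<delta> \<le> \<bar>y\<bar>" and ab: "\<bar>a - y\<bar> \<le> \<kappa>" "\<bar>b - y\<bar> \<le> \<kappa>"
    and k: "0 \<le> \<kappa>" "2 * \<kappa> \<le> \<delta>" and s: "0 < s" "s \<le> 1"
  shows "\<bar>kernel s G a b - kernel s G y y\<bar> \<le> 2 * M * (4 * \<kappa> / \<delta>^2) powr s + \<eta> * (2 / \<delta>) powr s"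
proof -
  have M0: "0 \<le> M" using G[of 0] by linarith
  have eta0: "0 \<le> \<eta>" using cont[of 0 0] k d by (simp add: divide_nonneg_pos)
  have ageq: "\<delta>/2 \<le> \<bar>a\<bar>" "\<delta>/2 \<le> \<bar>b\<bar>" using ab d k by linarith+
  hence nz: "a \<noteq> 0" "b \<noteq> 0" "y \<noteq> 0" using d by auto
  define U where "U = rphi_plus a b"
  define V where "V = rphi_minus a b"
  define W where "W = -1 / y"
  have dd: "\<delta>/2 * (\<delta>/2) = \<delta>^2/4" "\<delta>/2 * \<delta> = \<delta>^2/2" by (simp_all add: power2_eq_square)
  txt \<open>\<open>\<phi>\<^sup>-\<close> is small since \<open>a \<approx> b\<close>, and \<open>\<phi>\<^sup>+\<close> is close to \<open>-1/y\<close>.\<close>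
  have V_eq: "V = (a - b) / (2 * (a * b))" using nz by (simp add: V_def rphi_minus_def field_simps)
  have "\<bar>a - b\<bar> \<le> 2 * \<kappa>" using ab by linarith
  moreover have "\<delta>^2/2 \<le> \<bar>2 * (a * b)\<bar>" using mult_mono[OF ageq] d dd by (simp add: abs_mult)
  ultimately have "\<bar>V\<bar> \<le> (2 * \<kappa>) / (\<delta>^2/2)" unfolding V_eq using d by (intro frac_bound) auto
  hence Vb: "\<bar>V\<bar> \<le> 4 * \<kappa> / \<delta>^2" by (simp add: field_simps)
  have UW_eq: "U - W = ((a - y) / (a * y) + (b - y) / (b * y)) / 2"
    using nz by (simp add: U_def W_def rphi_plus_def field_simps)
  have "\<delta>^2/2 \<le> \<bar>a * y\<bar>" "\<delta>^2/2 \<le> \<bar>b * y\<bar>"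
    using mult_mono[OF ageq(1) d(2)] mult_mono[OF ageq(2) d(2)] d dd by (simp_all add: abs_mult)
  hence "\<bar>(a - y) / (a * y)\<bar> \<le> \<kappa> / (\<delta>^2/2)" "\<bar>(b - y) / (b * y)\<bar> \<le> \<kappa> / (\<delta>^2/2)"
    using ab d by (intro frac_bound; auto)+
  hence "\<bar>U - W\<bar> \<le> (\<kappa> / (\<delta>^2/2) + \<kappa> / (\<delta>^2/2)) / 2"
    unfolding UW_eq by (simp add: order_trans[OF abs_triangle_ineq])
  hence UWb: "\<bar>U - W\<bar> \<le> 2 * \<kappa> / \<delta>^2" by (simp add: field_simps)
  have "\<bar>U\<bar> \<le> max (1/\<bar>a\<bar>) (1/\<bar>b\<bar>)" unfolding U_def by (rule rphi_le_max(1)[OF nz(1,2)])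
  moreover have "1/\<bar>a\<bar> \<le> 2/\<delta>" "1/\<bar>b\<bar> \<le> 2/\<delta>" using ageq d by (auto simp: field_simps)
  ultimately have Ub: "\<bar>U\<bar> \<le> 2/\<delta>" by linarith
  have "kernel s G a b - kernel s G y y
      = G U * \<bar>V\<bar> powr s + (G U - G W) * \<bar>U\<bar> powr s + G W * (\<bar>U\<bar> powr s - \<bar>W\<bar> powr s)"
    using nz by (simp add: kernel_def U_def V_def W_def rphi_plus_def rphi_minus_def algebra_simps)
  moreover have "\<bar>x + y + z\<bar> \<le> \<bar>x\<bar> + \<bar>y\<bar> + \<bar>z\<bar>" for x y z :: real by arith
  ultimately have "\<bar>kernel s G a b - kernel s G y y\<bar>
      \<le> \<bar>G U\<bar> * \<bar>V\<bar> powr s + \<bar>G U - G W\<bar> * \<bar>U\<bar> powr s + \<bar>G W\<bar> * \<bar>\<bar>U\<bar> powr s - \<bar>W\<bar> powr s\<bar>"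
    by (metis abs_mult abs_of_nonneg powr_ge_zero)
  also have "\<dots> \<le> M * (4 * \<kappa> / \<delta>^2) powr s + \<eta> * (2 / \<delta>) powr s + M * (4 * \<kappa> / \<delta>^2) powr s"
  proof (intro add_mono mult_mono)
    show "\<bar>V\<bar> powr s \<le> (4 * \<kappa> / \<delta>^2) powr s" using Vb s by (intro powr_mono2) auto
    show "\<bar>U\<bar> powr s \<le> (2 / \<delta>) powr s" using Ub s by (intro powr_mono2) auto
    show "\<bar>G U - G W\<bar> \<le> \<eta>" using UWb by (intro cont)
    have "\<bar>\<bar>U\<bar> powr s - \<bar>W\<bar> powr s\<bar> \<le> \<bar>\<bar>U\<bar> - \<bar>W\<bar>\<bar> powr s" using s by (intro powr_diff_le) auto
    also have "\<dots> \<le> (4 * \<kappa> / \<delta>^2) powr s" using UWb s k d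
      by (intro powr_mono2) (auto simp: divide_right_mono)
    finally show "\<bar>\<bar>U\<bar> powr s - \<bar>W\<bar> powr s\<bar> \<le> (4 * \<kappa> / \<delta>^2) powr s" .
  qed (auto simp: G M0 eta0)
  finally show ?thesis by simp
qed

section \<open>The truncated singularity\<close>

definition sing :: "real \<Rightarrow> real \<Rightarrow> real \<Rightarrow> real" where
  "sing s \<rho> z = indicator {-\<rho>..\<rho>} z * \<bar>z\<bar> powr (-s)"

lemma sing_nonneg: "0 \<le> sing s \<rho> z" by (simp add: sing_def)

lemma sing_meas[measurable]: "sing s \<rho> \<in> borel_measurable borel"
  unfolding sing_def by measurable

lemma sing_eq_powr: "\<bar>z\<bar> \<le> \<rho> \<Longrightarrow> sing s \<rho> z = \<bar>z\<bar> powr (-s)"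
  by (simp add: sing_def indicator_def abs_le_iff)

text \<open>Pointwise comparison of the kernel at \<open>(a,b)\<close> with the kernel at \<open>(y,y)\<close>, uniformly
  in \<open>y\<close>: the singular part (\<open>|y| < \<delta>\<close>) is charged to truncated singularities, the rest
  to the local estimate.\<close>
lemma kernel_shift_pointwise:
  assumes G: "\<And>x. \<bar>G x\<bar> \<le> M"
    and cont: "\<And>u v. \<bar>u - v\<bar> \<le> 2 * \<kappa> / \<delta>^2 \<Longrightarrow> \<bar>G u - G v\<bar> \<le> \<eta>"
    and d: "0 < \<delta>" and ab: "\<bar>a - y\<bar> \<le> \<kappa>" "\<bar>b - y\<bar> \<le> \<kappa>"
    and k: "0 \<le> \<kappa>" "2 * \<kappa> \<le> \<delta>" and s: "0 < s" "s \<le> 1"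
  shows "\<bar>kernel s G a b - kernel s G y y\<bar>
    \<le> 2 * M * (sing s (2*\<delta>) a + sing s (2*\<delta>) b) + 4 * M * sing s \<delta> y
       + (2 * M * (4 * \<kappa> / \<delta>^2) powr s + \<eta> * (2 / \<delta>) powr s)"
proof -
  have M0: "0 \<le> M" using G[of 0] by linarith
  have eta0: "0 \<le> \<eta>" using cont[of 0 0] k d by (simp add: divide_nonneg_pos)
  show ?thesis
  proof (cases "\<bar>y\<bar> < \<delta>")
    case True
    have "\<bar>a\<bar> \<le> 2 * \<delta>" "\<bar>b\<bar> \<le> 2 * \<delta>" using ab True k by linarith+
    hence "\<bar>kernel s G a b\<bar> \<le> 2 * M * (sing s (2*\<delta>) a + sing s (2*\<delta>) b)"
      using kernel_bound[where G=G and M=M and a=a and b=b, OF G less_imp_le[OF s(1)]] by (simp add: sing_eq_powr)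
    moreover have "\<bar>kernel s G y y\<bar> \<le> 4 * M * sing s \<delta> y"
      using kernel_bound[where G=G and M=M and a=y and b=y, OF G less_imp_le[OF s(1)]] True by (simp add: sing_eq_powr)
    moreover have "0 \<le> 2 * M * (4 * \<kappa> / \<delta>^2) powr s + \<eta> * (2 / \<delta>) powr s" using M0 eta0 by simp
    ultimately show ?thesis by linarith
  next
    case False
    have "0 \<le> 2 * M * (sing s (2*\<delta>) a + sing s (2*\<delta>) b) + 4 * M * sing s \<delta> y"
      using M0 sing_nonneg by (simp add: add_nonneg_nonneg)
    moreover have "\<bar>kernel s G a b - kernel s G y y\<bar> \<le> 2 * M * (4 * \<kappa> / \<delta>^2) powr s + \<eta> * (2 / \<delta>) powr s"
      using False d ab k s by (intro kernel_local[OF G cont]) auto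
    ultimately show ?thesis by linarith
  qed
qed

lemma int_sing_half:
  fixes s \<rho> :: real assumes "0 < s" "s < 1" "0 < \<rho>"
  shows "(\<integral>\<^sup>+z. ennreal (indicator {0..\<rho>} z * z powr (-s)) \<partial>lborel) = ennreal (\<rho> powr (1-s) / (1-s))"
proof -
  have "((\<lambda>x. x powr (-s)) has_integral (\<rho> powr (-s+1) / (-s+1))) {0..\<rho>}"
    using has_integral_powr_from_0[of "-s" \<rho>] assms by simp
  from nn_integral_has_integral_lebesgue'[OF _ this]
  have "(\<integral>\<^sup>+x. ennreal (x powr (-s)) * indicator {0..\<rho>} x \<partial>lborel) = ennreal (\<rho> powr (-s+1) / (-s+1))"
    by simp
  moreover have "\<And>x. ennreal (x powr (-s)) * indicator {0..\<rho>} x = ennreal (indicator {0..\<rho>} x * x powr (-s))"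
    by (simp add: indicator_def)
  ultimately show ?thesis by simp
qed

lemma int_sing:
  fixes s \<rho> :: real assumes "0 < s" "s < 1" "0 < \<rho>"
  shows "(\<integral>\<^sup>+z. ennreal (sing s \<rho> z) \<partial>lborel) = ennreal (2 * \<rho> powr (1-s) / (1-s))"
proof -
  define h where "h z = ennreal (indicator {0..\<rho>} z * z powr (-s))" for z
  have h_meas: "h \<in> borel_measurable borel" unfolding h_def by measurable
  have split: "ennreal (sing s \<rho> z) = h z + h (0 + (-1) * z)" for z
    by (cases "z = 0"; cases "z < 0") (auto simp: h_def sing_def indicator_def)
  have "(\<integral>\<^sup>+z. ennreal (sing s \<rho> z) \<partial>lborel) = integral\<^sup>N lborel h + (\<integral>\<^sup>+z. h (0 + (-1) * z) \<partial>lborel)"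
    unfolding split using h_meas by (intro nn_integral_add) auto
  also have "(\<integral>\<^sup>+z. h (0 + (-1) * z) \<partial>lborel) = integral\<^sup>N lborel h"
    using nn_integral_real_affine[OF h_meas, of "-1" 0] by simp
  also have "integral\<^sup>N lborel h = ennreal (\<rho> powr (1-s) / (1-s))"
    unfolding h_def by (rule int_sing_half[OF assms])
  also have "\<dots> + \<dots> = ennreal (\<rho> powr (1-s) / (1-s) + \<rho> powr (1-s) / (1-s))"
    using assms by (intro ennreal_plus[symmetric]) auto
  finally show ?thesis by simp
qed

lemma nn_bound_integrable:
  fixes h :: "'a \<Rightarrow> real"
  assumes [measurable]: "h \<in> borel_measurable M" and nn: "\<And>x. 0 \<le> h x"
    and le: "(\<integral>\<^sup>+x. ennreal (h x) \<partial>M) \<le> ennreal C" and C: "0 \<le> C"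
  shows "integrable M h" "integral\<^sup>L M h \<le> C"
proof -
  have "(\<integral>\<^sup>+x. ennreal (norm (h x)) \<partial>M) < \<infinity>" using le nn
    by (simp add: le_less_trans)
  thus "integrable M h" by (intro integrableI_bounded) auto
  have "integral\<^sup>L M h = enn2real (\<integral>\<^sup>+x. ennreal (h x) \<partial>M)"
    by (rule integral_eq_nn_integral) (auto simp: nn)
  also have "\<dots> \<le> C" using le C
    by (metis enn2real_ennreal enn2real_mono ennreal_neq_top top.not_eq_extremum)
  finally show "integral\<^sup>L M h \<le> C" .
qed

definition uniformly_equicontinuous :: "('i \<Rightarrow> real \<Rightarrow> real) \<Rightarrow> bool" where
  "uniformly_equicontinuous G \<longleftrightarrow> (\<forall>e>0. \<exists>\<theta>>0. \<forall>i u v. \<bar>u - v\<bar> < \<theta> \<longrightarrow> \<bar>G i u - G i v\<bar> \<le> e)"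

lemma uniformly_continuous_imp_equicontinuous:
  fixes F :: "real \<Rightarrow> real"
  assumes "uniformly_continuous_on UNIV F"
  shows "uniformly_equicontinuous (\<lambda>_. F)"
  unfolding uniformly_equicontinuous_def
proof (intro allI impI)
  fix e :: real assume "0 < e"
  with assms obtain d where "0 < d" "\<And>x x'. dist x' x < d \<Longrightarrow> dist (F x') (F x) < e"
    unfolding uniformly_continuous_on_def by blast
  thus "\<exists>\<theta>>0. \<forall>i u v. \<bar>u - v\<bar> < \<theta> \<longrightarrow> \<bar>F u - F v\<bar> \<le> e"
    by (intro exI[of _ d]) (auto simp: dist_real_def less_imp_le)
qed

locale setting =
  fixes nu :: "real \<Rightarrow> real" and sig :: "(real \<times> real) measure" and s B :: real
  assumes nu_meas[measurable]: "nu \<in> borel_measurable borel"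
    and nu_nn: "\<And>x. 0 \<le> nu x" and nu_le: "\<And>x. nu x \<le> B"
    and P_prob: "prob_space (density lborel (\<lambda>x. ennreal (nu x)))"
    and sig_prob: "prob_space sig"
    and sets_sig[measurable_cong]: "sets sig = sets borel"
    and sig_box: "AE p in sig. \<bar>fst p\<bar> \<le> 1 \<and> \<bar>snd p\<bar> \<le> 1"
    and s_pos: "0 < s" and s_lt: "s < 1"
begin

abbreviation "P \<equiv> density lborel (\<lambda>x. ennreal (nu x))"
abbreviation "D \<equiv> P \<Otimes>\<^sub>M sig"

lemma B_nonneg: "0 \<le> B" using nu_nn[of 0] nu_le[of 0] by simp

sublocale pp: pair_prob_space P sig
  by (simp add: pair_prob_space_def pair_sigma_finite_def P_prob sig_prob prob_space_imp_sigma_finite)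

lemma sig_fst[measurable]: "fst \<in> borel_measurable sig" and sig_snd[measurable]: "snd \<in> borel_measurable sig"
  unfolding measurable_cong_sets[OF sets_sig refl]
  by (auto intro!: borel_measurable_continuous_onI continuous_intros)

text \<open>Bound for the mass of the truncated singularity under \<open>\<nu>\<close> (after the scaling
  \<open>r \<mapsto> r/\<surd>2\<close>); it is \<open>O(\<rho>\<^sup>1\<^sup>-\<^sup>s)\<close> because the density of \<open>\<nu>\<close> is bounded.\<close>
definition sing_mass :: "real \<Rightarrow> real" where
  "sing_mass \<rho> = (B * sqrt 2 * 2 / (1 - s)) * \<rho> powr (1 - s)"

lemma sing_mass_nonneg: "0 \<le> sing_mass \<rho>" unfolding sing_mass_def using B_nonneg s_lt by simp

lemma P_sing:
  assumes "0 < \<rho>"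
  shows "(\<integral>\<^sup>+r. ennreal (sing s \<rho> (c - r / sqrt 2)) \<partial>P) \<le> ennreal (sing_mass \<rho>)"
proof -
  have "(\<integral>\<^sup>+r. ennreal (sing s \<rho> (c - r / sqrt 2)) \<partial>P)
      = (\<integral>\<^sup>+r. ennreal (nu r) * ennreal (sing s \<rho> (c + (- 1 / sqrt 2) * r)) \<partial>lborel)"
    by (subst nn_integral_density) auto
  also have "\<dots> \<le> (\<integral>\<^sup>+r. ennreal B * ennreal (sing s \<rho> (c + (- 1 / sqrt 2) * r)) \<partial>lborel)"
    by (intro nn_integral_mono mult_right_mono ennreal_leI) (auto simp: nu_le)
  also have "\<dots> = ennreal B * (\<integral>\<^sup>+r. ennreal (sing s \<rho> (c + (- 1 / sqrt 2) * r)) \<partial>lborel)"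
    by (rule nn_integral_cmult) auto
  also have "(\<integral>\<^sup>+r. ennreal (sing s \<rho> (c + (- 1 / sqrt 2) * r)) \<partial>lborel)
      = ennreal (sqrt 2) * (\<integral>\<^sup>+z. ennreal (sing s \<rho> z) \<partial>lborel)"
  proof -
    have "(\<integral>\<^sup>+z. ennreal (sing s \<rho> z) \<partial>lborel)
        = ennreal (1 / sqrt 2) * (\<integral>\<^sup>+r. ennreal (sing s \<rho> (c + (- 1 / sqrt 2) * r)) \<partial>lborel)"
      using nn_integral_real_affine[of "\<lambda>z. ennreal (sing s \<rho> z)" "- 1 / sqrt 2" c] by simp
    hence "ennreal (sqrt 2) * (\<integral>\<^sup>+z. ennreal (sing s \<rho> z) \<partial>lborel)
        = (ennreal (sqrt 2) * ennreal (1 / sqrt 2)) * (\<integral>\<^sup>+r. ennreal (sing s \<rho> (c + (- 1 / sqrt 2) * r)) \<partial>lborel)"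
      by (simp add: mult.assoc)
    also have "ennreal (sqrt 2) * ennreal (1 / sqrt 2) = 1"
      by (simp add: ennreal_mult[symmetric] del: ennreal_mult)
    finally show ?thesis by simp
  qed
  also have "ennreal B * (ennreal (sqrt 2) * (\<integral>\<^sup>+z. ennreal (sing s \<rho> z) \<partial>lborel)) = ennreal (sing_mass \<rho>)"
    unfolding int_sing[OF s_pos s_lt assms] sing_mass_def using B_nonneg s_lt
    by (simp add: ennreal_mult[symmetric] del: ennreal_mult)
  finally show ?thesis by simp
qed

text \<open>The same bound for the truncated singularity at \<open>c - r/\<surd>2 - u(p)\<close> under
  \<open>\<nu> \<otimes> \<sigma>\<close>, for any measurable shift \<open>u\<close>: integrate first in \<open>r\<close>.\<close>
lemma D_sing:
  assumes "0 < \<rho>" and [measurable]: "u \<in> borel_measurable sig"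
  shows "integrable D (\<lambda>z. sing s \<rho> (c - fst z / sqrt 2 - u (snd z)))"
    "(\<integral>z. sing s \<rho> (c - fst z / sqrt 2 - u (snd z)) \<partial>D) \<le> sing_mass \<rho>"
proof -
  have "(\<integral>\<^sup>+z. ennreal (sing s \<rho> (c - fst z / sqrt 2 - u (snd z))) \<partial>D)
     = (\<integral>\<^sup>+p. (\<integral>\<^sup>+r. ennreal (sing s \<rho> ((c - u p) - r / sqrt 2)) \<partial>P) \<partial>sig)"
    by (subst pp.nn_integral_snd[symmetric]) (auto simp: algebra_simps)
  also have "\<dots> \<le> (\<integral>\<^sup>+p. ennreal (sing_mass \<rho>) \<partial>sig)"
    by (intro nn_integral_mono P_sing assms(1))
  also have "\<dots> = ennreal (sing_mass \<rho>)" using pp.M2.emeasure_space_1 by simp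
  finally have nn: "(\<integral>\<^sup>+z. ennreal (sing s \<rho> (c - fst z / sqrt 2 - u (snd z))) \<partial>D) \<le> ennreal (sing_mass \<rho>)" .
  have "(\<lambda>z. sing s \<rho> (c - fst z / sqrt 2 - u (snd z))) \<in> borel_measurable D" by measurable
  from nn_bound_integrable[OF this sing_nonneg nn sing_mass_nonneg]
  show "integrable D (\<lambda>z. sing s \<rho> (c - fst z / sqrt 2 - u (snd z)))"
    "(\<integral>z. sing s \<rho> (c - fst z / sqrt 2 - u (snd z)) \<partial>D) \<le> sing_mass \<rho>" by auto
qed

lemma D_negpow:
  assumes [measurable]: "u \<in> borel_measurable sig"
  shows "integrable D (\<lambda>z. \<bar>c - fst z / sqrt 2 - u (snd z)\<bar> powr (-s))"
    "(\<integral>z. \<bar>c - fst z / sqrt 2 - u (snd z)\<bar> powr (-s) \<partial>D) \<le> sing_mass 1 + 1"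
proof -
  have le: "\<bar>x\<bar> powr (-s) \<le> sing s 1 x + 1" for x
  proof (cases "\<bar>x\<bar> \<le> 1")
    case True thus ?thesis by (simp add: sing_eq_powr)
  next
    case False
    hence "\<bar>x\<bar> powr (-s) \<le> \<bar>x\<bar> powr 0" using s_pos by (intro powr_mono) auto
    thus ?thesis using False sing_nonneg[of s 1 x] by (auto split: if_splits)
  qed
  note I = D_sing[of 1 u c, simplified]
  have I2: "integrable D (\<lambda>z. sing s 1 (c - fst z / sqrt 2 - u (snd z)) + 1)"
    using I by (intro Bochner_Integration.integrable_add pp.integrable_const) auto
  show i: "integrable D (\<lambda>z. \<bar>c - fst z / sqrt 2 - u (snd z)\<bar> powr (-s))"
    by (rule Bochner_Integration.integrable_bound[OF I2])
      (auto intro!: AE_I2 simp: le order_trans[OF le] sing_nonneg add_nonneg_nonneg)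
  have "(\<integral>z. \<bar>c - fst z / sqrt 2 - u (snd z)\<bar> powr (-s) \<partial>D)
      \<le> (\<integral>z. sing s 1 (c - fst z / sqrt 2 - u (snd z)) + 1 \<partial>D)"
    by (intro integral_mono i I2 le)
  also have "\<dots> = (\<integral>z. sing s 1 (c - fst z / sqrt 2 - u (snd z)) \<partial>D) + 1"
    using I by (subst Bochner_Integration.integral_add) (auto simp: pp.integrable_const pp.prob_space)
  finally show "(\<integral>z. \<bar>c - fst z / sqrt 2 - u (snd z)\<bar> powr (-s) \<partial>D) \<le> sing_mass 1 + 1" using I by simp
qed

lemma kernel_integrable:
  assumes [measurable]: "G \<in> borel_measurable borel" "u0 \<in> borel_measurable sig" "u1 \<in> borel_measurable sig"
    and G: "\<And>x. \<bar>G x\<bar> \<le> M"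
  shows "integrable D (\<lambda>z. kernel s G (c - fst z / sqrt 2 - u0 (snd z)) (c - fst z / sqrt 2 - u1 (snd z)))"
    "\<bar>\<integral>z. kernel s G (c - fst z / sqrt 2 - u0 (snd z)) (c - fst z / sqrt 2 - u1 (snd z)) \<partial>D\<bar>
       \<le> 4 * M * (sing_mass 1 + 1)"
proof -
  have M0: "0 \<le> M" using G[of 0] by linarith
  let ?b = "\<lambda>z. 2 * M * (\<bar>c - fst z / sqrt 2 - u0 (snd z)\<bar> powr (-s) + \<bar>c - fst z / sqrt 2 - u1 (snd z)\<bar> powr (-s))"
  have ib: "integrable D ?b"
    using D_negpow by (intro Bochner_Integration.integrable_mult_right Bochner_Integration.integrable_add) auto
  have pb: "\<bar>kernel s G (c - fst z / sqrt 2 - u0 (snd z)) (c - fst z / sqrt 2 - u1 (snd z))\<bar> \<le> ?b z" for z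
    using kernel_bound[OF G] s_pos by simp
  show i: "integrable D (\<lambda>z. kernel s G (c - fst z / sqrt 2 - u0 (snd z)) (c - fst z / sqrt 2 - u1 (snd z)))"
    by (rule Bochner_Integration.integrable_bound[OF ib]) (auto intro!: AE_I2 intro: order_trans[OF pb] simp: M0)
  have "\<bar>\<integral>z. kernel s G (c - fst z / sqrt 2 - u0 (snd z)) (c - fst z / sqrt 2 - u1 (snd z)) \<partial>D\<bar> \<le> (\<integral>z. ?b z \<partial>D)"
    by (rule order_trans[OF integral_abs_bound integral_mono]) (use i ib pb in auto)
  also have "\<dots> = 2 * M * ((\<integral>z. \<bar>c - fst z / sqrt 2 - u0 (snd z)\<bar> powr (-s) \<partial>D)
                         + (\<integral>z. \<bar>c - fst z / sqrt 2 - u1 (snd z)\<bar> powr (-s) \<partial>D))"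
    using D_negpow by (simp add: Bochner_Integration.integral_add)
  also have "\<dots> \<le> 2 * M * ((sing_mass 1 + 1) + (sing_mass 1 + 1))"
    using D_negpow M0 by (intro mult_left_mono add_mono) auto
  finally show "\<bar>\<integral>z. kernel s G (c - fst z / sqrt 2 - u0 (snd z)) (c - fst z / sqrt 2 - u1 (snd z)) \<partial>D\<bar>
       \<le> 4 * M * (sing_mass 1 + 1)"
    by (simp add: algebra_simps)
qed

lemma AE_D_snd:
  assumes ae: "AE p in sig. Q p" and m: "{p \<in> space sig. Q p} \<in> sets sig"
  shows "AE z in D. Q (snd z)"
proof -
  have "{z \<in> space D. Q (snd z)} = space P \<times> {p \<in> space sig. Q p}" by (auto simp: space_pair_measure)
  hence ms: "{z \<in> space D. Q (snd z)} \<in> sets D" using m by simp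
  show ?thesis by (rule pp.AE_pair_measure[OF ms]) (auto intro!: AE_I2 ae)
qed

text \<open>The shift estimate for a single \<open>G\<close>: integrating the pointwise comparison.\<close>
lemma shift_estimate:
  assumes [measurable]: "G \<in> borel_measurable borel" "u0 \<in> borel_measurable sig" "u1 \<in> borel_measurable sig"
    and G: "\<And>x. \<bar>G x\<bar> \<le> M"
    and cont: "\<And>u v. \<bar>u - v\<bar> \<le> 2 * \<kappa> / \<delta>^2 \<Longrightarrow> \<bar>G u - G v\<bar> \<le> \<eta>"
    and d: "0 < \<delta>" and k: "0 \<le> \<kappa>" "2 * \<kappa> \<le> \<delta>"
    and ae: "AE p in sig. \<bar>u0 p\<bar> \<le> \<kappa> \<and> \<bar>u1 p\<bar> \<le> \<kappa>"
  shows "\<bar>(\<integral>z. kernel s G (c - fst z / sqrt 2 - u0 (snd z)) (c - fst z / sqrt 2 - u1 (snd z)) \<partial>D)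
          - (\<integral>z. kernel s G (c - fst z / sqrt 2) (c - fst z / sqrt 2) \<partial>D)\<bar>
     \<le> 4 * M * sing_mass (2 * \<delta>) + 4 * M * sing_mass \<delta> + (2 * M * (4 * \<kappa> / \<delta>^2) powr s + \<eta> * (2 / \<delta>) powr s)"
proof -
  have M0: "0 \<le> M" using G[of 0] by linarith
  define K where "K = 2 * M * (4 * \<kappa> / \<delta>^2) powr s + \<eta> * (2 / \<delta>) powr s"
  define A where "A = (\<lambda>z. c - fst z / sqrt 2 - u0 (snd z))"
  define A' where "A' = (\<lambda>z. c - fst z / sqrt 2 - u1 (snd z))"
  define Y where "Y = (\<lambda>z::real \<times> real \<times> real. c - fst z / sqrt 2)"
  have [measurable]: "A \<in> borel_measurable D" "A' \<in> borel_measurable D" "Y \<in> borel_measurable D"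
    unfolding A_def A'_def Y_def by measurable
  define bnd where "bnd = (\<lambda>z. 2 * M * (sing s (2*\<delta>) (A z) + sing s (2*\<delta>) (A' z)) + 4 * M * sing s \<delta> (Y z) + K)"
  have i1: "integrable D (\<lambda>z. kernel s G (A z) (A' z))"
    unfolding A_def A'_def by (rule kernel_integrable[OF _ _ _ G]) auto
  have i0: "integrable D (\<lambda>z. kernel s G (Y z) (Y z))"
    unfolding Y_def using kernel_integrable(1)[of G "\<lambda>_. 0" "\<lambda>_. 0" M c, OF _ _ _ G] by simp
  have sA: "integrable D (\<lambda>z. sing s (2*\<delta>) (A z))" "(\<integral>z. sing s (2*\<delta>) (A z) \<partial>D) \<le> sing_mass (2*\<delta>)"
    unfolding A_def using D_sing[of "2*\<delta>" u0 c] d by auto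
  have sA': "integrable D (\<lambda>z. sing s (2*\<delta>) (A' z))" "(\<integral>z. sing s (2*\<delta>) (A' z) \<partial>D) \<le> sing_mass (2*\<delta>)"
    unfolding A'_def using D_sing[of "2*\<delta>" u1 c] d by auto
  have sY: "integrable D (\<lambda>z. sing s \<delta> (Y z))" "(\<integral>z. sing s \<delta> (Y z) \<partial>D) \<le> sing_mass \<delta>"
    unfolding Y_def using D_sing[of "\<delta>" "\<lambda>_. 0" c] d by auto
  have ib: "integrable D bnd" unfolding bnd_def using sA sA' sY
    by (intro Bochner_Integration.integrable_add Bochner_Integration.integrable_mult_right pp.integrable_const) auto
  have pw: "AE z in D. \<bar>kernel s G (A z) (A' z) - kernel s G (Y z) (Y z)\<bar> \<le> bnd z"
  proof -
    have "AE z in D. \<bar>u0 (snd z)\<bar> \<le> \<kappa> \<and> \<bar>u1 (snd z)\<bar> \<le> \<kappa>"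
      by (rule AE_D_snd[OF ae]) measurable
    thus ?thesis
      unfolding bnd_def K_def A_def A'_def Y_def
      by eventually_elim (use d k s_pos s_lt in \<open>auto intro!: kernel_shift_pointwise[OF G cont]\<close>)
  qed
  have "\<bar>(\<integral>z. kernel s G (A z) (A' z) \<partial>D) - (\<integral>z. kernel s G (Y z) (Y z) \<partial>D)\<bar>
      = \<bar>\<integral>z. kernel s G (A z) (A' z) - kernel s G (Y z) (Y z) \<partial>D\<bar>"
    using i1 i0 by (simp add: Bochner_Integration.integral_diff)
  also have "\<dots> \<le> (\<integral>z. \<bar>kernel s G (A z) (A' z) - kernel s G (Y z) (Y z)\<bar> \<partial>D)" by (rule integral_abs_bound)
  also have "\<dots> \<le> (\<integral>z. bnd z \<partial>D)"
    using pw i1 i0 ib by (intro integral_mono_AE) (auto intro: Bochner_Integration.integrable_diff)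
  also have "(\<integral>z. bnd z \<partial>D) = 2 * M * ((\<integral>z. sing s (2*\<delta>) (A z) \<partial>D) + (\<integral>z. sing s (2*\<delta>) (A' z) \<partial>D))
                             + 4 * M * (\<integral>z. sing s \<delta> (Y z) \<partial>D) + K"
    unfolding bnd_def using sA sA' sY
    by (simp add: Bochner_Integration.integral_add pp.integrable_const pp.prob_space Bochner_Integration.integrable_add)
  also have "\<dots> \<le> 2 * M * (sing_mass (2*\<delta>) + sing_mass (2*\<delta>)) + 4 * M * sing_mass \<delta> + K"
    using sA sA' sY M0 by (intro add_mono mult_left_mono) auto
  finally show ?thesis unfolding A_def A'_def Y_def K_def by (simp add: algebra_simps)
qed

text \<open>The cut-off \<open>\<delta>\<close> is chosen
  first to make the singular contribution small, then \<open>\<kappa>\<close> for the local one.\<close>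
lemma shift_small:
  fixes G :: "'i \<Rightarrow> real \<Rightarrow> real"
  assumes meas: "\<And>i. G i \<in> borel_measurable borel"
    and bnd: "\<And>i x. \<bar>G i x\<bar> \<le> M" and equi: "uniformly_equicontinuous G"
    and eps: "0 < \<epsilon>"
  obtains \<kappa>0 where "0 < \<kappa>0"
    "\<And>\<kappa> i c u0 u1. 0 \<le> \<kappa> \<Longrightarrow> \<kappa> \<le> \<kappa>0 \<Longrightarrow> u0 \<in> borel_measurable sig \<Longrightarrow> u1 \<in> borel_measurable sig
      \<Longrightarrow> (AE p in sig. \<bar>u0 p\<bar> \<le> \<kappa> \<and> \<bar>u1 p\<bar> \<le> \<kappa>) \<Longrightarrow>
      \<bar>(\<integral>z. kernel s (G i) (c - fst z / sqrt 2 - u0 (snd z)) (c - fst z / sqrt 2 - u1 (snd z)) \<partial>D)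
          - (\<integral>z. kernel s (G i) (c - fst z / sqrt 2) (c - fst z / sqrt 2) \<partial>D)\<bar> \<le> \<epsilon>"
proof -
  have M0: "0 \<le> M" using bnd[of undefined 0] by linarith
  define C1 where "C1 = 4 * M * (B * sqrt 2 * 2 / (1 - s))"
  have "0 \<le> C1" unfolding C1_def using M0 B_nonneg s_lt by simp
  then obtain b where b: "b > 0" "\<And>x. 0 \<le> x \<Longrightarrow> x \<le> b \<Longrightarrow> C1 * x powr (1 - s) \<le> \<epsilon> / 4"
    using powr_small[of "1 - s" "\<epsilon>/4" C1] s_lt eps by auto
  define \<delta> where "\<delta> = b / 2"
  have d: "0 < \<delta>" unfolding \<delta>_def using b by simp
  have singular: "4 * M * sing_mass (2 * \<delta>) + 4 * M * sing_mass \<delta> \<le> \<epsilon> / 2"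
    using b(2)[of "2 * \<delta>"] b(2)[of \<delta>] d unfolding sing_mass_def C1_def \<delta>_def by simp
  define \<eta> where "\<eta> = (\<epsilon> / 4) / (2 / \<delta>) powr s"
  have eta: "0 < \<eta>" "\<eta> * (2 / \<delta>) powr s = \<epsilon> / 4" unfolding \<eta>_def using eps d by auto
  obtain \<theta> where th: "\<theta> > 0" "\<And>i u v. \<bar>u - v\<bar> < \<theta> \<Longrightarrow> \<bar>G i u - G i v\<bar> \<le> \<eta>"
    using equi eta(1) unfolding uniformly_equicontinuous_def by blast
  define C2 where "C2 = 2 * M * (4 / \<delta>^2) powr s"
  have "0 \<le> C2" unfolding C2_def using M0 by simp
  then obtain b2 where b2: "b2 > 0" "\<And>x. 0 \<le> x \<Longrightarrow> x \<le> b2 \<Longrightarrow> C2 * x powr s \<le> \<epsilon> / 4"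
    using powr_small[of s "\<epsilon>/4" C2] s_pos eps by auto
  define \<kappa>0 where "\<kappa>0 = min b2 (min (\<delta> / 2) (\<theta> * \<delta>^2 / 4))"
  have k0: "0 < \<kappa>0" "\<kappa>0 \<le> b2" "2 * \<kappa>0 \<le> \<delta>" "\<kappa>0 \<le> \<theta> * \<delta>^2 / 4"
    unfolding \<kappa>0_def using b2 d th by auto
  show ?thesis
  proof (rule that[OF k0(1)])
    fix \<kappa> i c and u0 u1 :: "real \<times> real \<Rightarrow> real"
    assume k: "0 \<le> \<kappa>" "\<kappa> \<le> \<kappa>0" and m: "u0 \<in> borel_measurable sig" "u1 \<in> borel_measurable sig"
      and ae: "AE p in sig. \<bar>u0 p\<bar> \<le> \<kappa> \<and> \<bar>u1 p\<bar> \<le> \<kappa>"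
    have cont: "\<bar>G i u - G i v\<bar> \<le> \<eta>" if "\<bar>u - v\<bar> \<le> 2 * \<kappa> / \<delta>^2" for u v
    proof -
      have "2 * \<kappa> / \<delta>^2 \<le> 2 * (\<theta> * \<delta>^2 / 4) / \<delta>^2" using k k0 d by (intro divide_right_mono) auto
      also have "\<dots> < \<theta>" using d th by (simp add: field_simps)
      finally show ?thesis using that th(2) by simp
    qed
    have hoelder: "2 * M * (4 * \<kappa> / \<delta>^2) powr s \<le> \<epsilon> / 4"
    proof -
      have "2 * M * (4 * \<kappa> / \<delta>^2) powr s = C2 * \<kappa> powr s"
        unfolding C2_def using k d by (simp add: powr_mult[symmetric] field_simps)
      also have "\<dots> \<le> \<epsilon> / 4" using b2 k k0 by auto
      finally show ?thesis .
    qed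
    have "\<bar>(\<integral>z. kernel s (G i) (c - fst z / sqrt 2 - u0 (snd z)) (c - fst z / sqrt 2 - u1 (snd z)) \<partial>D)
          - (\<integral>z. kernel s (G i) (c - fst z / sqrt 2) (c - fst z / sqrt 2) \<partial>D)\<bar>
     \<le> 4 * M * sing_mass (2 * \<delta>) + 4 * M * sing_mass \<delta> + (2 * M * (4 * \<kappa> / \<delta>^2) powr s + \<eta> * (2 / \<delta>) powr s)"
      using k k0 by (intro shift_estimate[OF meas m _ cont d _ _ ae] bnd) auto
    also have "\<dots> \<le> \<epsilon>" using singular hoelder eta eps by linarith
    finally show "\<bar>(\<integral>z. kernel s (G i) (c - fst z / sqrt 2 - u0 (snd z)) (c - fst z / sqrt 2 - u1 (snd z)) \<partial>D)
          - (\<integral>z. kernel s (G i) (c - fst z / sqrt 2) (c - fst z / sqrt 2) \<partial>D)\<bar> \<le> \<epsilon>" .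
  qed
qed

end

section \<open>The operator on real points\<close>

text \<open>On real points the operator is the integral of the kernel against \<open>\<mu>\<^sub>\<kappa>\<close>; expanding
  \<open>\<mu>\<^sub>\<kappa>\<close> as an image of \<open>\<nu> \<otimes> \<sigma>\<close> exhibits it as a shifted kernel integral.\<close>
lemma T_op_Some: "T_op nu sig \<kappa> E s g (Some x) =
  (\<integral>q. kernel s (\<lambda>t. g (Some t)) (x + (E - fst q) / sqrt 2) (x + (E - snd q) / sqrt 2) \<partial>mu nu sig \<kappa>)"
  unfolding T_op_def option.case by (intro Bochner_Integration.integral_cong refl)
    (auto simp: phi_plus_def phi_minus_def opt_abs_def kernel_def rphi_plus_def rphi_minus_def)

context setting
begin

lemma T_op_as_integral:
  assumes [measurable]: "(\<lambda>t. g (Some t)) \<in> borel_measurable borel"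
  shows "T_op nu sig \<kappa> E s g (Some x) =
    (\<integral>z. kernel s (\<lambda>t. g (Some t)) (x + E / sqrt 2 - fst z / sqrt 2 - \<kappa> * fst (snd z) / sqrt 2)
                                 (x + E / sqrt 2 - fst z / sqrt 2 - \<kappa> * snd (snd z) / sqrt 2) \<partial>D)"
proof -
  have mm: "(\<lambda>(r, p). (r + \<kappa> * fst p, r + \<kappa> * snd p)) \<in> measurable D borel"
    unfolding borel_prod[symmetric] by measurable
  have mf: "(\<lambda>q. kernel s (\<lambda>t. g (Some t)) (x + (E - fst q) / sqrt 2) (x + (E - snd q) / sqrt 2))
      \<in> borel_measurable borel"
    by measurable
  have eq: "x + (E - (r + \<kappa> * a)) / sqrt 2 = x + E / sqrt 2 - r / sqrt 2 - \<kappa> * a / sqrt 2" for r a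
    by (simp add: diff_divide_distrib add_divide_distrib)
  show ?thesis
    unfolding T_op_Some mu_def integral_distr[OF mm mf]
    by (intro Bochner_Integration.integral_cong refl) (simp add: case_prod_beta eq)
qed

lemma T_op_measurable:
  assumes [measurable]: "(\<lambda>t. g (Some t)) \<in> borel_measurable borel"
  shows "(\<lambda>x. T_op nu sig \<kappa> E s g (Some x)) \<in> borel_measurable borel"
  unfolding T_op_as_integral[OF assms] by measurable

lemma T_op_bounded:
  assumes [measurable]: "(\<lambda>t. g (Some t)) \<in> borel_measurable borel" and b: "\<And>t. \<bar>g (Some t)\<bar> \<le> M"
  shows "\<bar>T_op nu sig \<kappa> E s g (Some x)\<bar> \<le> 4 * M * (sing_mass 1 + 1)"
  unfolding T_op_as_integral[OF assms(1)]
  using kernel_integrable(2)[of "\<lambda>t. g (Some t)" "\<lambda>p. \<kappa> * fst p / sqrt 2" "\<lambda>p. \<kappa> * snd p / sqrt 2" M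
      "x + E / sqrt 2", OF _ _ _ b]
  by simp

text \<open>The shifts \<open>\<kappa> p\<^sub>i/\<surd>2\<close> produced by \<open>\<mu>\<^sub>\<kappa>\<close> are bounded by \<open>\<kappa>\<close>, since \<open>\<sigma>\<close> lives on
  the unit box.\<close>
lemma AE_sig_shift:
  assumes k: "0 \<le> \<kappa>"
  shows "AE p in sig. \<bar>\<kappa> * fst p / sqrt 2\<bar> \<le> \<kappa> \<and> \<bar>\<kappa> * snd p / sqrt 2\<bar> \<le> \<kappa>"
proof -
  have *: "\<bar>\<kappa> * a / sqrt 2\<bar> \<le> \<kappa>" if "\<bar>a\<bar> \<le> 1" for a
  proof -
    have "\<bar>\<kappa> * a / sqrt 2\<bar> = \<kappa> * \<bar>a\<bar> / sqrt 2" using k by (simp add: abs_mult)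
    also have "\<dots> \<le> \<kappa> * 1 / 1" using k that by (intro frac_le mult_left_mono) auto
    finally show ?thesis by simp
  qed
  show ?thesis by (rule AE_mp[OF sig_box AE_I2]) (use * in blast)
qed

text \<open>\<open>T\<^sub>0\<close> maps a bounded, uniformly equicontinuous family to a uniformly equicontinuous
  one: translating \<open>x\<close> by \<open>v - u\<close> is a shift of both kernel arguments.\<close>
lemma T0_equicontinuous:
  assumes m: "\<And>E. (\<lambda>t. g E (Some t)) \<in> borel_measurable borel"
    and b: "\<And>E t. \<bar>g E (Some t)\<bar> \<le> M"
    and equi: "uniformly_equicontinuous (\<lambda>E t. g E (Some t))"
  shows "uniformly_equicontinuous (\<lambda>E x. T_op nu sig 0 E s (g E) (Some x))"
  unfolding uniformly_equicontinuous_def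
proof (intro allI impI)
  fix e :: real assume "0 < e"
  from shift_small[OF m b equi this] obtain \<kappa>0 where k0: "0 < \<kappa>0" and
    H: "\<And>\<kappa> E c u0 u1. 0 \<le> \<kappa> \<Longrightarrow> \<kappa> \<le> \<kappa>0 \<Longrightarrow> u0 \<in> borel_measurable sig \<Longrightarrow> u1 \<in> borel_measurable sig
      \<Longrightarrow> (AE p in sig. \<bar>u0 p\<bar> \<le> \<kappa> \<and> \<bar>u1 p\<bar> \<le> \<kappa>) \<Longrightarrow>
      \<bar>(\<integral>z. kernel s (\<lambda>t. g E (Some t)) (c - fst z / sqrt 2 - u0 (snd z)) (c - fst z / sqrt 2 - u1 (snd z)) \<partial>D)
          - (\<integral>z. kernel s (\<lambda>t. g E (Some t)) (c - fst z / sqrt 2) (c - fst z / sqrt 2) \<partial>D)\<bar> \<le> e"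
    by blast
  show "\<exists>\<theta>>0. \<forall>E u v. \<bar>u - v\<bar> < \<theta> \<longrightarrow> \<bar>T_op nu sig 0 E s (g E) (Some u) - T_op nu sig 0 E s (g E) (Some v)\<bar> \<le> e"
  proof (intro exI[of _ \<kappa>0] conjI allI impI k0)
    fix E u v :: real assume uv: "\<bar>u - v\<bar> < \<kappa>0"
    have eq: "v + E / sqrt 2 - r - (v - u) = u + E / sqrt 2 - r" for r by simp
    have "\<bar>(\<integral>z. kernel s (\<lambda>t. g E (Some t)) (v + E / sqrt 2 - fst z / sqrt 2 - (v - u))
                                           (v + E / sqrt 2 - fst z / sqrt 2 - (v - u)) \<partial>D)
          - (\<integral>z. kernel s (\<lambda>t. g E (Some t)) (v + E / sqrt 2 - fst z / sqrt 2) (v + E / sqrt 2 - fst z / sqrt 2) \<partial>D)\<bar> \<le> e"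
      using H[of "\<bar>v - u\<bar>" "\<lambda>_. v - u" "\<lambda>_. v - u" E "v + E / sqrt 2"] uv by auto
    thus "\<bar>T_op nu sig 0 E s (g E) (Some u) - T_op nu sig 0 E s (g E) (Some v)\<bar> \<le> e"
      unfolding T_op_as_integral[OF m] by (simp only: eq mult_zero_left div_0 diff_zero)
  qed
qed

text \<open>Split
  \<open>T\<^sub>\<kappa> g\<^sub>\<kappa> - T\<^sub>0 g\<^sub>0 = T\<^sub>\<kappa> (g\<^sub>\<kappa> - g\<^sub>0) + (T\<^sub>\<kappa> g\<^sub>0 - T\<^sub>0 g\<^sub>0)\<close>; the first term is small by the
  uniform bound on the operator, the second by the shift estimate.\<close>
lemma T_step_convergence:
  assumes m: "\<And>\<kappa> E. (\<lambda>t. g \<kappa> E (Some t)) \<in> borel_measurable borel"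
    and b: "\<And>\<kappa> E t. \<bar>g \<kappa> E (Some t)\<bar> \<le> M"
    and equi: "uniformly_equicontinuous (\<lambda>E t. g 0 E (Some t))"
    and conv: "\<And>\<epsilon>. 0 < \<epsilon> \<Longrightarrow> \<forall>\<^sub>F \<kappa> in at_right 0. \<forall>E x. \<bar>g \<kappa> E (Some x) - g 0 E (Some x)\<bar> \<le> \<epsilon>"
    and e: "0 < \<epsilon>"
  shows "\<forall>\<^sub>F \<kappa> in at_right 0. \<forall>E x. \<bar>T_op nu sig \<kappa> E s (g \<kappa> E) (Some x) - T_op nu sig 0 E s (g 0 E) (Some x)\<bar> \<le> \<epsilon>"
proof -
  define \<epsilon>1 where "\<epsilon>1 = \<epsilon> / 2 / (4 * (sing_mass 1 + 1))"
  have e1: "0 < \<epsilon>1" "4 * \<epsilon>1 * (sing_mass 1 + 1) = \<epsilon> / 2"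
    unfolding \<epsilon>1_def using sing_mass_nonneg[of 1] e by (auto simp: field_simps)
  from shift_small[OF m b equi, of "\<epsilon> / 2"] e obtain \<kappa>2 where k2: "0 < \<kappa>2" and
    H: "\<And>\<kappa> E c u0 u1. 0 \<le> \<kappa> \<Longrightarrow> \<kappa> \<le> \<kappa>2 \<Longrightarrow> u0 \<in> borel_measurable sig \<Longrightarrow> u1 \<in> borel_measurable sig
      \<Longrightarrow> (AE p in sig. \<bar>u0 p\<bar> \<le> \<kappa> \<and> \<bar>u1 p\<bar> \<le> \<kappa>) \<Longrightarrow>
      \<bar>(\<integral>z. kernel s (\<lambda>t. g 0 E (Some t)) (c - fst z / sqrt 2 - u0 (snd z)) (c - fst z / sqrt 2 - u1 (snd z)) \<partial>D)
          - (\<integral>z. kernel s (\<lambda>t. g 0 E (Some t)) (c - fst z / sqrt 2) (c - fst z / sqrt 2) \<partial>D)\<bar> \<le> \<epsilon> / 2"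
    by auto
  have step: "\<bar>T_op nu sig \<kappa> E s (g \<kappa> E) (Some x) - T_op nu sig 0 E s (g 0 E) (Some x)\<bar> \<le> \<epsilon>"
    if k: "0 < \<kappa>" "\<kappa> < \<kappa>2" and close: "\<forall>E x. \<bar>g \<kappa> E (Some x) - g 0 E (Some x)\<bar> \<le> \<epsilon>1" for \<kappa> E x
  proof -
    define c where "c = x + E / sqrt 2"
    define G1 where "G1 = (\<lambda>t. g \<kappa> E (Some t))"
    define G0 where "G0 = (\<lambda>t. g 0 E (Some t))"
    have [measurable]: "G1 \<in> borel_measurable borel" "G0 \<in> borel_measurable borel"
      using m by (auto simp: G1_def G0_def)
    let ?a = "\<lambda>z. c - fst z / sqrt 2 - \<kappa> * fst (snd z) / sqrt 2"
    let ?b = "\<lambda>z. c - fst z / sqrt 2 - \<kappa> * snd (snd z) / sqrt 2"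
    have T1: "T_op nu sig \<kappa> E s (g \<kappa> E) (Some x) = (\<integral>z. kernel s G1 (?a z) (?b z) \<partial>D)"
      unfolding T_op_as_integral[OF m] c_def G1_def ..
    have T0: "T_op nu sig 0 E s (g 0 E) (Some x) = (\<integral>z. kernel s G0 (c - fst z / sqrt 2) (c - fst z / sqrt 2) \<partial>D)"
      unfolding T_op_as_integral[OF m] c_def G0_def by (simp only: mult_zero_left div_0 diff_zero)
    have "(\<integral>z. kernel s G1 (?a z) (?b z) \<partial>D) - (\<integral>z. kernel s G0 (?a z) (?b z) \<partial>D)
        = (\<integral>z. kernel s (\<lambda>t. G1 t - G0 t) (?a z) (?b z) \<partial>D)"
      unfolding kernel_diff[symmetric]
      by (intro Bochner_Integration.integral_diff[symmetric] kernel_integrable(1)[where M=M])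
        (auto simp: G1_def G0_def b m)
    also have "\<bar>\<dots>\<bar> \<le> 4 * \<epsilon>1 * (sing_mass 1 + 1)"
      using close by (intro kernel_integrable(2)) (auto simp: G1_def G0_def intro!: borel_measurable_diff m)
    finally have d1: "\<bar>(\<integral>z. kernel s G1 (?a z) (?b z) \<partial>D) - (\<integral>z. kernel s G0 (?a z) (?b z) \<partial>D)\<bar> \<le> \<epsilon> / 2"
      using e1 by simp
    have d2: "\<bar>(\<integral>z. kernel s G0 (?a z) (?b z) \<partial>D)
              - (\<integral>z. kernel s G0 (c - fst z / sqrt 2) (c - fst z / sqrt 2) \<partial>D)\<bar> \<le> \<epsilon> / 2"
      using H[of \<kappa> "\<lambda>p. \<kappa> * fst p / sqrt 2" "\<lambda>p. \<kappa> * snd p / sqrt 2" E c] k AE_sig_shift[of \<kappa>]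
      by (auto simp: G0_def)
    show ?thesis unfolding T1 T0 using d1 d2 by linarith
  qed
  have "\<forall>\<^sub>F \<kappa> in at_right 0. 0 < \<kappa> \<and> \<kappa> < \<kappa>2"
    using eventually_at_right_less k2 by (auto simp: eventually_at_right_field)
  with conv[OF e1(1)] show ?thesis
    by eventually_elim (use step in blast)
qed

section \<open>Iterates of the operator\<close>

lemma iterate_measurable:
  assumes "(\<lambda>t. f (Some t)) \<in> borel_measurable borel"
  shows "(\<lambda>t. (T_op nu sig \<kappa> E s ^^ m) f (Some t)) \<in> borel_measurable borel"
  using assms by (induction m) (simp_all add: T_op_measurable)

lemma iterate_bounded:
  assumes meas: "(\<lambda>t. f (Some t)) \<in> borel_measurable borel" and bnd: "\<And>t. \<bar>f (Some t)\<bar> \<le> M"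
  shows "\<exists>M'. \<forall>\<kappa> E t. \<bar>(T_op nu sig \<kappa> E s ^^ m) f (Some t)\<bar> \<le> M'"
proof (induction m)
  case 0 show ?case using bnd by auto
next
  case (Suc m)
  then obtain M' where "\<And>\<kappa> E t. \<bar>(T_op nu sig \<kappa> E s ^^ m) f (Some t)\<bar> \<le> M'" by blast
  hence "\<And>\<kappa> E t. \<bar>(T_op nu sig \<kappa> E s ^^ Suc m) f (Some t)\<bar> \<le> 4 * M' * (sing_mass 1 + 1)"
    using T_op_bounded[OF iterate_measurable[OF meas]] by simp
  thus ?case by blast
qed

lemma iterate_equicontinuous:
  assumes meas: "(\<lambda>t. f (Some t)) \<in> borel_measurable borel" and bnd: "\<And>t. \<bar>f (Some t)\<bar> \<le> M"
    and ucont: "uniformly_continuous_on UNIV (\<lambda>t. f (Some t))"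
  shows "uniformly_equicontinuous (\<lambda>E t. (T_op nu sig 0 E s ^^ m) f (Some t))"
proof (induction m)
  case 0 show ?case using uniformly_continuous_imp_equicontinuous[OF ucont] by simp
next
  case (Suc m)
  obtain M' where "\<And>\<kappa> E t. \<bar>(T_op nu sig \<kappa> E s ^^ m) f (Some t)\<bar> \<le> M'"
    using iterate_bounded[OF meas bnd] by blast
  from T0_equicontinuous[OF iterate_measurable[OF meas] this Suc.IH] show ?case by simp
qed

lemma iterate_convergence:
  assumes meas: "(\<lambda>t. f (Some t)) \<in> borel_measurable borel" and bnd: "\<And>t. \<bar>f (Some t)\<bar> \<le> M"
    and ucont: "uniformly_continuous_on UNIV (\<lambda>t. f (Some t))"
    and e: "0 < \<epsilon>"
  shows "\<forall>\<^sub>F \<kappa> in at_right 0. \<forall>E x.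
    \<bar>(T_op nu sig \<kappa> E s ^^ m) f (Some x) - (T_op nu sig 0 E s ^^ m) f (Some x)\<bar> \<le> \<epsilon>"
  using e
proof (induction m arbitrary: \<epsilon>)
  case 0 thus ?case by simp
next
  case (Suc m)
  obtain M' where "\<And>\<kappa> E t. \<bar>(T_op nu sig \<kappa> E s ^^ m) f (Some t)\<bar> \<le> M'"
    using iterate_bounded[OF meas bnd] by blast
  from T_step_convergence[OF iterate_measurable[OF meas] this
      iterate_equicontinuous[OF meas bnd ucont] Suc.IH Suc.prems]
  show ?case by simp
qed

end

lemma T_op_iterate_None: "(T_op nu sig \<kappa> E s ^^ m) f None = (T_op nu sig 0 E s ^^ m) f None"
  by (cases m) (simp_all add: T_op_def)

lemma tendsto_at_infinity_tail:
  fixes F :: "real \<Rightarrow> 'a::metric_space"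
  assumes "(F \<longlongrightarrow> L) at_infinity" "0 < e"
  obtains R where "\<And>x. R \<le> \<bar>x\<bar> \<Longrightarrow> dist (F x) L < e"
  using tendstoD[OF assms] unfolding eventually_at_infinity by auto

lemma continuous_limit_at_infinity_bounded:
  fixes F :: "real \<Rightarrow> 'a::real_normed_vector"
  assumes cont: "continuous_on UNIV F" and lim: "(F \<longlongrightarrow> L) at_infinity"
  shows "bounded (range F)"
proof -
  obtain R where R: "\<And>x. R \<le> \<bar>x\<bar> \<Longrightarrow> dist (F x) L < 1"
    using tendsto_at_infinity_tail[OF lim zero_less_one] by blast
  have "bounded (F ` {-\<bar>R\<bar>..\<bar>R\<bar>})"
    by (intro compact_imp_bounded compact_continuous_image continuous_on_subset[OF cont]) auto
  moreover have "bounded (F ` {x. R \<le> \<bar>x\<bar>})"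
    using R by (intro bounded_subset[OF bounded_ball[of L 1]]) (auto simp: dist_commute)
  moreover have "UNIV = {-\<bar>R\<bar>..\<bar>R\<bar>} \<union> {x. R \<le> \<bar>x\<bar>}" by auto
  hence "range F = F ` {-\<bar>R\<bar>..\<bar>R\<bar>} \<union> F ` {x. R \<le> \<bar>x\<bar>}" by (metis image_Un)
  ultimately show ?thesis by simp
qed

lemma continuous_limit_at_infinity_uniformly_continuous:
  fixes F :: "real \<Rightarrow> 'a::metric_space"
  assumes cont: "continuous_on UNIV F" and lim: "(F \<longlongrightarrow> L) at_infinity"
  shows "uniformly_continuous_on UNIV F"
  unfolding uniformly_continuous_on_def
proof (intro allI impI)
  fix e :: real assume e: "0 < e"
  obtain R where R: "\<And>x. R \<le> \<bar>x\<bar> \<Longrightarrow> dist (F x) L < e / 2"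
    using tendsto_at_infinity_tail[OF lim, of "e / 2"] e by auto
  define R' where "R' = \<bar>R\<bar> + 1"
  have "uniformly_continuous_on {-R'..R'} F"
    by (rule compact_uniformly_continuous) (auto intro: continuous_on_subset[OF cont])
  then obtain d where d: "0 < d" "\<And>x x'. x \<in> {-R'..R'} \<Longrightarrow> x' \<in> {-R'..R'} \<Longrightarrow> dist x' x < d \<Longrightarrow> dist (F x') (F x) < e"
    unfolding uniformly_continuous_on_def using e by metis
  show "\<exists>d>0. \<forall>x\<in>UNIV. \<forall>x'\<in>UNIV. dist x' x < d \<longrightarrow> dist (F x') (F x) < e"
  proof (intro exI[of _ "min d 1"] conjI ballI impI)
    fix u v :: real assume uv: "dist v u < min d 1"
    show "dist (F v) (F u) < e"
    proof (cases "\<bar>u\<bar> \<le> R' \<and> \<bar>v\<bar> \<le> R'")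
      case True thus ?thesis using d(2)[of u v] uv by (auto simp: abs_le_iff)
    next
      case False
      hence "R \<le> \<bar>u\<bar>" "R \<le> \<bar>v\<bar>" using uv unfolding R'_def dist_real_def by linarith+
      hence "dist (F u) L < e / 2" "dist (F v) L < e / 2" using R by auto
      thus ?thesis using dist_triangle_half_r[of L "F v" e "F u"] by (simp add: dist_commute)
    qed
  qed (use d in auto)
qed

theorem lemma3p3:
  fixes nu :: "real \<Rightarrow> real" and sig :: "(real \<times> real) measure"
    and K s :: real and m :: nat and f :: "real option \<Rightarrow> real"
  assumes "nu \<in> borel_measurable borel"
    and "\<forall>x. 0 \<le> nu x"
    and "\<exists>B. \<forall>x. nu x \<le> B"
    and "\<forall>x. x \<notin> {-K..K} \<longrightarrow> nu x = 0"
    and "prob_space (density lborel (\<lambda>x. ennreal (nu x)))"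
    and "prob_space sig"
    and "sets sig = sets borel"
    and "measure sig ({-1..1} \<times> {-1..1}) = 1"
    and "0 < s" and "s < 1/2"
    and "in_C_rbar f"
  shows "\<forall>\<epsilon>>0. \<forall>\<^sub>F \<kappa> in at_right 0. \<forall>E w.
     \<bar>(T_op nu sig \<kappa> E s ^^ m) f w - (T_op nu sig 0 E s ^^ m) f w\<bar> \<le> \<epsilon>"
proof (intro allI impI)
  fix \<epsilon> :: real assume e: "0 < \<epsilon>"
  obtain B where B: "\<And>x. nu x \<le> B" using assms(3) by blast
  have "AE p in sig. p \<in> {-1..1} \<times> {-1..1}"
    by (rule prob_space.AE_prob_1[OF assms(6)]) (use assms(8) in simp)
  hence box: "AE p in sig. \<bar>fst p\<bar> \<le> 1 \<and> \<bar>snd p\<bar> \<le> 1"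
    by (rule AE_mp[OF _ AE_I2]) (auto simp: abs_le_iff)
  interpret setting nu sig s B
    by (rule setting.intro[OF assms(1) _ B assms(5,6,7) box assms(9)]) (use assms(2,10) in auto)
  have cont: "continuous_on UNIV (\<lambda>t. f (Some t))" and lim: "((\<lambda>t. f (Some t)) \<longlongrightarrow> f None) at_infinity"
    using assms(11) unfolding in_C_rbar_def by auto
  obtain M where M: "\<And>t. \<bar>f (Some t)\<bar> \<le> M"
    using continuous_limit_at_infinity_bounded[OF cont lim] by (auto simp: bounded_iff)
  have "\<forall>\<^sub>F \<kappa> in at_right 0. \<forall>E x.
      \<bar>(T_op nu sig \<kappa> E s ^^ m) f (Some x) - (T_op nu sig 0 E s ^^ m) f (Some x)\<bar> \<le> \<epsilon>"
    using iterate_convergence[OF borel_measurable_continuous_onI[OF cont] M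
        continuous_limit_at_infinity_uniformly_continuous[OF cont lim] e] .
  thus "\<forall>\<^sub>F \<kappa> in at_right 0. \<forall>E w. \<bar>(T_op nu sig \<kappa> E s ^^ m) f w - (T_op nu sig 0 E s ^^ m) f w\<bar> \<le> \<epsilon>"
    by eventually_elim (metis T_op_iterate_None e not_None_eq diff_self abs_zero less_imp_le)
qed

end
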